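(* In the setting of the context, assume (G2') and ($\overline G{}_3'$), and let $\tilde\rho$ be a metric on $X$ inducing its topology, with constants $\gamma\ge1$, $C\ge1$ such that $C^{-1}\tilde\rho(x,y)^{-\gamma}\le\tilde G(x,y)\le C\tilde\rho(x,y)^{-\gamma}$ for all $x,y\in X$. Then there exists $\tilde c_3\ge1$ such that for all $x\in X_0$, $0<r<\tilde R_0(x)$ and $y\in X\setminus\tilde U(x,r)$, $$\big\|\tilde\varepsilon_y^{\overline{\tilde U(x,r)}}\big\|\ \ge\ \tilde c_3^{-1}\,r^{\gamma}\,\tilde G(y,x).$$
   Context: $(X,\rho)$ separable metric space, $X_0\subsetneq X$ open. For every open $U\subseteq X$ and $x\in X$ a finite Borel measure $\mu_x^U$ is given with, for all open $U,V$ and $x$: $\mu_x^U(U)=0$, $\|\mu_x^U\|:=\mu_x^U(X)\le1$, $\mu_x^U=\varepsilon_x$ (Dirac) if $x\notin U$; $y\mapsto\mu_y^U(E)$ universally measurable for Borel $E$; $\mu_x^U=\int\mu_y^U\,d\mu_x^V(y)$ if $V\subseteq U$. For closed $A$, $\varepsilon_x^A:=\mu_x^{X\setminus A}$ and $\tilde\varepsilon_x^A:=\frac{w}{w(x)}\varepsilon_x^A$ (the measure with density $w/w(x)$ w.r.t. $\varepsilon_x^A$). $G\colon X\times X\to(0,\infty]$ Borel; $V(x,s):=\{y:G(y,x)^{-1}<s\}$; $S_0(x):=\sup\{s>0:\overline{V(x,s)}\subseteq X_0\}$ for $x\in X_0$. $\tilde U(x,r):=\{y:\tilde\rho(x,y)<r\}$,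 $\tilde R_0(x):=\sup\{r>0:\overline{\tilde U(x,r)}\subseteq X_0\}$. (G2'): for every $x$, $G(x,x)=\lim_{y\to x}G(y,x)=\infty$; there is a Borel $w$ with $0<w\le1$ and $\int w\,d\mu_x^U\le w(x)$ for all open $U$, $x$; there is $\tilde c>1$ with $\tilde G(x,z)\wedge\tilde G(y,z)\le\tilde c\tilde G(x,y)$ for all $x,y,z$, where $\tilde G(x,y):=G(x,y)/(w(x)w(y))$; $\lambda:=\inf w(X_0)>0$; for each $x$ and neighborhood $V$ of $x$, $G(\cdot,x)/w$ is bounded on $X\setminus V$. ($\overline G{}_3'$): there is $c_3\ge1$ with $\|\varepsilon_y^{\overline{V(x,s)}}\|\ge c_3^{-1}sG(y,x)$ for all $x\in X_0$, $0<s<S_0(x)$, $y\in X\setminus V(x,s)$. *)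

theory Defs
  imports "HOL-Probability.Probability"
begin

definition universally_measurable :: "('a::topological_space \<Rightarrow> ennreal) \<Rightarrow> bool" where
  "universally_measurable f \<longleftrightarrow>
     (\<forall>\<nu>::'a measure. finite_measure \<nu> \<and> sets \<nu> = sets borel \<longrightarrow> f \<in> borel_measurable (completion \<nu>))"

definition harmonic_kernel :: "('a::topological_space set \<Rightarrow> 'a \<Rightarrow> 'a measure) \<Rightarrow> bool" where
  "harmonic_kernel mu \<longleftrightarrow>
     (\<forall>U x. open U \<longrightarrow> sets (mu U x) = sets borel) \<and>
     (\<forall>U x. open U \<longrightarrow> emeasure (mu U x) U = 0) \<and>
     (\<forall>U x. open U \<longrightarrow> emeasure (mu U x) UNIV \<le> 1) \<and>
     (\<forall>U x. open U \<and> x \<notin> U \<longrightarrow> mu U x = return borel x) \<and>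
     (\<forall>U E. open U \<and> E \<in> sets borel \<longrightarrow> universally_measurable (\<lambda>y. emeasure (mu U y) E)) \<and>
     (\<forall>U V x E. open U \<and> open V \<and> V \<subseteq> U \<and> E \<in> sets borel \<longrightarrow>
        emeasure (mu U x) E = (\<integral>\<^sup>+ y. emeasure (mu U y) E \<partial>(completion (mu V x))))"

definition eps :: "('a set \<Rightarrow> 'a \<Rightarrow> 'a measure) \<Rightarrow> 'a set \<Rightarrow> 'a \<Rightarrow> 'a measure" where
  "eps mu A x = mu (- A) x"

text \<open>Total mass of \<tilde>\<epsilon>_x^A = (w / w x) \<epsilon>_x^A.\<close>
definition eps_tilde_norm :: "('a set \<Rightarrow> 'a \<Rightarrow> 'a measure) \<Rightarrow> ('a \<Rightarrow> real) \<Rightarrow> 'a set \<Rightarrow> 'a \<Rightarrow> ennreal" where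
  "eps_tilde_norm mu w A x = (\<integral>\<^sup>+ z. ennreal (w z / w x) \<partial>(eps mu A x))"

definition Gt :: "('a \<Rightarrow> 'a \<Rightarrow> ennreal) \<Rightarrow> ('a \<Rightarrow> real) \<Rightarrow> 'a \<Rightarrow> 'a \<Rightarrow> ennreal" where
  "Gt G w x y = G x y / ennreal (w x * w y)"

definition Vset :: "('a \<Rightarrow> 'a \<Rightarrow> ennreal) \<Rightarrow> 'a \<Rightarrow> real \<Rightarrow> 'a set" where
  "Vset G x s = {y. inverse (G y x) < ennreal s}"

definition S0 :: "('a::topological_space \<Rightarrow> 'a \<Rightarrow> ennreal) \<Rightarrow> 'a set \<Rightarrow> 'a \<Rightarrow> ereal" where
  "S0 G X0 x = Sup {ereal s | s. s > 0 \<and> closure (Vset G x s) \<subseteq> X0}"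

definition Ut :: "('a \<Rightarrow> 'a \<Rightarrow> real) \<Rightarrow> 'a \<Rightarrow> real \<Rightarrow> 'a set" where
  "Ut rt x r = {y. rt x y < r}"

definition R0t :: "('a::topological_space \<Rightarrow> 'a \<Rightarrow> real) \<Rightarrow> 'a set \<Rightarrow> 'a \<Rightarrow> ereal" where
  "R0t rt X0 x = Sup {ereal r | r. r > 0 \<and> closure (Ut rt x r) \<subseteq> X0}"

definition neg_pow :: "real \<Rightarrow> real \<Rightarrow> ennreal" where
  "neg_pow t \<gamma> = (if t = 0 then \<infinity> else ennreal (t powr (- \<gamma>)))"

definition cond_G2' :: "('a::topological_space set \<Rightarrow> 'a \<Rightarrow> 'a measure) \<Rightarrow> ('a \<Rightarrow> 'a \<Rightarrow> ennreal) \<Rightarrow> ('a \<Rightarrow> real) \<Rightarrow> 'a set \<Rightarrow> bool" where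
  "cond_G2' mu G w X0 \<longleftrightarrow>
     (\<forall>x. G x x = \<infinity> \<and> ((\<lambda>y. G y x) \<longlongrightarrow> \<infinity>) (at x)) \<and>
     w \<in> borel_measurable borel \<and> (\<forall>x. 0 < w x \<and> w x \<le> 1) \<and>
     (\<forall>U x. open U \<longrightarrow> (\<integral>\<^sup>+ y. ennreal (w y) \<partial>(mu U x)) \<le> ennreal (w x)) \<and>
     (\<exists>c. c > 1 \<and> (\<forall>x y z. min (Gt G w x z) (Gt G w y z) \<le> ennreal c * Gt G w x y)) \<and>
     (\<exists>lam>0. \<forall>x\<in>X0. lam \<le> w x) \<and>
     (\<forall>x V. open V \<and> x \<in> V \<longrightarrow> (\<exists>M::real. \<forall>y. y \<notin> V \<longrightarrow> G y x / ennreal (w y) \<le> ennreal M))"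

definition cond_G3' :: "('a::topological_space set \<Rightarrow> 'a \<Rightarrow> 'a measure) \<Rightarrow> ('a \<Rightarrow> 'a \<Rightarrow> ennreal) \<Rightarrow> 'a set \<Rightarrow> bool" where
  "cond_G3' mu G X0 \<longleftrightarrow>
     (\<exists>c3::real. c3 \<ge> 1 \<and> (\<forall>x\<in>X0. \<forall>s. 0 < s \<and> ereal s < S0 G X0 x \<longrightarrow>
        (\<forall>y. y \<notin> Vset G x s \<longrightarrow>
           emeasure (eps mu (closure (Vset G x s)) y) UNIV \<ge> ennreal (s / c3) * G y x)))"

end

theory Submission
  imports Defs
begin

text \<open>
  Put \<open>s = (r/2)\<^sup>\<gamma>/C\<close>. The upper comparison \<open>G \<le> \<tilde>G \<le> C \<tilde>\<rho>\<^sup>-\<^sup>\<gamma>\<close> gives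
  \<open>V(x,s) \<subseteq> \<tilde>U(x,r/2)\<close>, so the closure of \<open>V(x,s)\<close> lies in \<open>\<tilde>U(x,r)\<close> and \<open>s < S\<^sub>0(x)\<close>;
  hence \<open>cond_G3'\<close> bounds \<open>\<parallel>\<epsilon>\<^sub>y\<^sup>A\<parallel>\<close> for \<open>A = closure V(x,s)\<close> from below. By the composition law,
  sweeping onto the larger closed set \<open>B = closure \<tilde>U(x,r) \<subseteq> X\<^sub>0\<close> does not decrease the mass, and
  \<open>\<epsilon>\<^sub>y\<^sup>B\<close> is carried by \<open>B\<close>, where \<open>w \<ge> \<lambda>\<close>. Finally \<open>G(y,x) = \<tilde>G(y,x) w(y) w(x)\<close> with
  \<open>w(x) \<ge> \<lambda>\<close>.
\<close>

lemma
  assumes "harmonic_kernel mu" and "open U"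
  shows harmonic_kernel_sets: "sets (mu U x) = sets borel"
    and harmonic_kernel_null: "emeasure (mu U x) U = 0"
    and harmonic_kernel_mass_le_1: "emeasure (mu U x) UNIV \<le> 1"
  using assms unfolding harmonic_kernel_def by metis+

lemma harmonic_kernel_space:
  assumes "harmonic_kernel mu" and "open U"
  shows "space (mu U x) = UNIV"
  using sets_eq_imp_space_eq[OF harmonic_kernel_sets[OF assms]] by simp

lemma harmonic_kernel_composition:
  assumes "harmonic_kernel mu" and "open U" "open V" "V \<subseteq> U" "E \<in> sets borel"
  shows "emeasure (mu U x) E = (\<integral>\<^sup>+ y. emeasure (mu U y) E \<partial>(completion (mu V x)))"
  using assms unfolding harmonic_kernel_def by metis

lemma eps_mass_mono:
  assumes kernel: "harmonic_kernel mu" and "closed A" "closed B" "A \<subseteq> B"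
  shows "emeasure (eps mu A y) UNIV \<le> emeasure (eps mu B y) UNIV"
proof -
  have U: "open (- A)" "open (- B)" "- B \<subseteq> - A"
    using assms by auto
  have "emeasure (mu (- A) y) UNIV = (\<integral>\<^sup>+ z. emeasure (mu (- A) z) UNIV \<partial>(completion (mu (- B) y)))"
    by (rule harmonic_kernel_composition[OF kernel U]) simp
  also have "\<dots> \<le> (\<integral>\<^sup>+ z. 1 \<partial>(mu (- B) y))"
    unfolding nn_integral_completion
    by (intro nn_integral_mono harmonic_kernel_mass_le_1[OF kernel U(1)])
  also have "\<dots> = emeasure (mu (- B) y) UNIV"
    using harmonic_kernel_space[OF kernel U(2)] by simp
  finally show ?thesis
    unfolding eps_def .
qed

lemma eps_tilde_norm_ge:
  assumes kernel: "harmonic_kernel mu" and B: "closed B"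
    and l: "\<forall>z\<in>B. l \<le> w z" and wy: "0 < w y"
  shows "ennreal (l / w y) * emeasure (eps mu B y) UNIV \<le> eps_tilde_norm mu w B y"
proof -
  define M where "M = eps mu B y"
  have U: "open (- B)"
    using B by auto
  have B_sets: "B \<in> sets M" and "- B \<in> sets M" and null: "emeasure M (- B) = 0"
    using B harmonic_kernel_sets[OF kernel U] harmonic_kernel_null[OF kernel U]
    by (auto simp: M_def eps_def)
  have "emeasure M UNIV \<le> emeasure M B + emeasure M (- B)"
    using emeasure_subadditive[OF B_sets \<open>- B \<in> sets M\<close>] by (simp add: Un_commute)
  then have "ennreal (l / w y) * emeasure M UNIV \<le> ennreal (l / w y) * emeasure M B"
    using null by (simp add: mult_left_mono)
  also have "\<dots> = (\<integral>\<^sup>+ z. ennreal (l / w y) * indicator B z \<partial>M)"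
    using nn_integral_cmult_indicator[OF B_sets] by simp
  also have "\<dots> \<le> (\<integral>\<^sup>+ z. ennreal (w z / w y) \<partial>M)"
    using l wy by (intro nn_integral_mono) (auto simp: indicator_def divide_right_mono ennreal_leI)
  finally show ?thesis
    unfolding eps_tilde_norm_def M_def .
qed

lemma closure_Ut_subset:
  fixes rt :: "'a::topological_space \<Rightarrow> 'a \<Rightarrow> real"
  assumes sym: "\<forall>x y. rt x y = rt y x" and triangle: "\<forall>x y z. rt x z \<le> rt x y + rt y z"
    and topology: "\<forall>S. open S \<longleftrightarrow> (\<forall>x\<in>S. \<exists>e>0. \<forall>y. rt x y < e \<longrightarrow> y \<in> S)"
  shows "closure (Ut rt x t) \<subseteq> {z. rt x z \<le> t}"
proof (rule closure_minimal)
  have "open {z. t < rt x z}"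
    unfolding topology[rule_format]
  proof
    fix z assume "z \<in> {z. t < rt x z}"
    then have "0 < rt x z - t" by simp
    moreover have "t < rt x y" if "rt z y < rt x z - t" for y
    proof -
      have "rt x z \<le> rt x y + rt y z" and "rt y z = rt z y"
        using triangle sym by blast+
      with that show ?thesis
        by linarith
    qed
    ultimately show "\<exists>e>0. \<forall>y. rt z y < e \<longrightarrow> y \<in> {z. t < rt x z}"
      by blast
  qed
  then show "closed {z. rt x z \<le> t}"
    by (simp add: closed_def Compl_eq not_le)
qed (auto simp: Ut_def)

lemma closure_Ut_subset_if_less_R0t:
  assumes "ereal r < R0t rt X0 x"
  shows "closure (Ut rt x r) \<subseteq> X0"
proof -
  obtain r' where "r < r'" and X0: "closure (Ut rt x r') \<subseteq> X0"
    using assms unfolding R0t_def by (auto simp: less_Sup_iff)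
  then have "Ut rt x r \<subseteq> Ut rt x r'"
    by (auto simp: Ut_def)
  then show ?thesis
    using X0 closure_mono by blast
qed

lemma S0_ge:
  assumes "0 < s" and "closure (Vset G x s) \<subseteq> X0"
  shows "ereal s \<le> S0 G X0 x"
  unfolding S0_def using assms by (intro Sup_upper) auto

lemma G_eq_Gt_mult:
  assumes "0 < w x" "0 < w y"
  shows "G x y = Gt G w x y * ennreal (w x * w y)"
proof -
  have "ennreal (w x * w y) \<noteq> 0"
    using assms by simp
  then show ?thesis
    unfolding Gt_def by (simp add: ennreal_divide_times)
qed

lemma G_le_Gt:
  assumes "0 < w x" "w x \<le> 1" "0 < w y" "w y \<le> 1"
  shows "G x y \<le> Gt G w x y"
proof -
  have "G x y = Gt G w x y * ennreal (w x * w y)"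
    using assms by (intro G_eq_Gt_mult)
  also have "\<dots> \<le> Gt G w x y * 1"
    using assms by (intro mult_left_mono) (auto intro: mult_le_one)
  finally show ?thesis
    by simp
qed

lemma ennreal_le_inverse_if_le_divide:
  fixes a :: ennreal and s :: real
  assumes "0 < s" and "a \<le> ennreal (1 / s)"
  shows "ennreal s \<le> inverse a"
proof (cases "a = 0")
  case False
  obtain g where g: "a = ennreal g" "0 < g"
    using assms False by (cases a) (auto simp: top_unique)
  then have "s \<le> inverse g"
    using assms by (simp add: field_simps)
  then show ?thesis
    using g by (simp add: inverse_ennreal)
qed simp

lemma Vset_subset_Ut:
  assumes sym: "\<forall>x y. rt x y = rt y x" and w: "\<forall>x. 0 < w x \<and> w x \<le> 1"
    and upper: "\<forall>x y. Gt G w x y \<le> ennreal C * neg_pow (rt x y) \<gamma>"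
    and "0 \<le> \<gamma>" "0 < C" "0 < t"
  shows "Vset G x (t powr \<gamma> / C) \<subseteq> Ut rt x t"
proof
  fix z assume z: "z \<in> Vset G x (t powr \<gamma> / C)"
  show "z \<in> Ut rt x t"
  proof (rule ccontr)
    assume "z \<notin> Ut rt x t"
    then have far: "t \<le> rt z x"
      using sym by (auto simp: Ut_def)
    have "G z x \<le> Gt G w z x"
      using w by (intro G_le_Gt) auto
    also have "\<dots> \<le> ennreal C * ennreal (rt z x powr - \<gamma>)"
      using upper[rule_format, of z x] far \<open>0 < t\<close> by (simp add: neg_pow_def)
    also have "\<dots> \<le> ennreal C * ennreal (t powr - \<gamma>)"
      using far assms by (intro mult_left_mono ennreal_leI powr_mono2') auto
    also have "\<dots> = ennreal (1 / (t powr \<gamma> / C))"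
      using \<open>0 < C\<close> by (subst ennreal_mult[symmetric]) (auto simp: powr_minus field_simps)
    finally have "ennreal (t powr \<gamma> / C) \<le> inverse (G z x)"
      using assms by (intro ennreal_le_inverse_if_le_divide) auto
    with z show False
      by (simp add: Vset_def)
  qed
qed

lemma closure_Vset_subset_Ut:
  assumes sym: "\<forall>x y. rt x y = rt y x" and triangle: "\<forall>x y z. rt x z \<le> rt x y + rt y z"
    and topology: "\<forall>S. open S \<longleftrightarrow> (\<forall>x\<in>S. \<exists>e>0. \<forall>y. rt x y < e \<longrightarrow> y \<in> S)"
    and w: "\<forall>x. 0 < w x \<and> w x \<le> 1"
    and upper: "\<forall>x y. Gt G w x y \<le> ennreal C * neg_pow (rt x y) \<gamma>"
    and "0 \<le> \<gamma>" "0 < C" "0 < r"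
  shows "closure (Vset G x ((r / 2) powr \<gamma> / C)) \<subseteq> Ut rt x r"
proof -
  have "closure (Vset G x ((r / 2) powr \<gamma> / C)) \<subseteq> closure (Ut rt x (r / 2))"
    using Vset_subset_Ut[OF sym w upper] assms by (intro closure_mono) simp
  also have "\<dots> \<subseteq> {z. rt x z \<le> r / 2}"
    by (rule closure_Ut_subset[OF sym triangle topology])
  also have "\<dots> \<subseteq> Ut rt x r"
    using \<open>0 < r\<close> by (auto simp: Ut_def)
  finally show ?thesis .
qed

lemma S0_gt_if_less_R0t:
  assumes sym: "\<forall>x y. rt x y = rt y x" and w: "\<forall>x. 0 < w x \<and> w x \<le> 1"
    and upper: "\<forall>x y. Gt G w x y \<le> ennreal C * neg_pow (rt x y) \<gamma>"
    and "0 < \<gamma>" "0 < C" "0 < r" and R0t: "ereal r < R0t rt X0 x"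
  shows "ereal ((r / 2) powr \<gamma> / C) < S0 G X0 x"
proof -
  have "(r / 2) powr \<gamma> / C < r powr \<gamma> / C"
    using assms by (intro divide_strict_right_mono powr_less_mono2) auto
  then have "ereal ((r / 2) powr \<gamma> / C) < ereal (r powr \<gamma> / C)"
    by simp
  also have "\<dots> \<le> S0 G X0 x"
  proof (rule S0_ge)
    have "Vset G x (r powr \<gamma> / C) \<subseteq> Ut rt x r"
      using Vset_subset_Ut[OF sym w upper] assms by simp
    then show "closure (Vset G x (r powr \<gamma> / C)) \<subseteq> X0"
      using closure_Ut_subset_if_less_R0t[OF R0t] closure_mono by blast
  qed (use assms in simp)
  finally show ?thesis .
qed

lemma ennreal_weight_Gt_le_G:
  assumes "0 < l" "l \<le> w x" "0 < w y" "0 \<le> a"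
  shows "ennreal (l\<^sup>2 * a) * Gt G w y x \<le> ennreal (l / w y) * (ennreal a * G y x)"
proof -
  have "0 < w x"
    using assms by linarith
  have "l\<^sup>2 * a \<le> l * w x * a"
    using assms by (intro mult_right_mono) (auto simp: power2_eq_square intro: mult_left_mono)
  also have "\<dots> = l / w y * a * (w y * w x)"
    using assms by (simp add: field_simps)
  finally have "ennreal (l\<^sup>2 * a) * Gt G w y x \<le> ennreal (l / w y * a * (w y * w x)) * Gt G w y x"
    by (intro mult_right_mono ennreal_leI) auto
  also have "ennreal (l / w y * a * (w y * w x)) = ennreal (l / w y * a) * ennreal (w y * w x)"
    using assms \<open>0 < w x\<close> by (intro ennreal_mult) auto
  also have "\<dots> = ennreal (l / w y) * ennreal a * ennreal (w y * w x)"
    using assms by (subst ennreal_mult) auto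
  also have "\<dots> * Gt G w y x = ennreal (l / w y) * (ennreal a * G y x)"
    using G_eq_Gt_mult[of w y x G, OF \<open>0 < w y\<close> \<open>0 < w x\<close>] by (simp only: mult_ac)
  finally show ?thesis .
qed

lemma eps_tilde_norm_Ut_ge:
  assumes kernel: "harmonic_kernel mu"
    and w: "\<forall>x. 0 < w x \<and> w x \<le> 1" and l: "0 < l" "\<forall>z\<in>X0. l \<le> w z"
    and c3: "0 < c3"
    and G3: "\<forall>x\<in>X0. \<forall>s. 0 < s \<and> ereal s < S0 G X0 x \<longrightarrow>
        (\<forall>y. y \<notin> Vset G x s \<longrightarrow>
           emeasure (eps mu (closure (Vset G x s)) y) UNIV \<ge> ennreal (s / c3) * G y x)"
    and sym: "\<forall>x y. rt x y = rt y x" and triangle: "\<forall>x y z. rt x z \<le> rt x y + rt y z"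
    and topology: "\<forall>S. open S \<longleftrightarrow> (\<forall>x\<in>S. \<exists>e>0. \<forall>y. rt x y < e \<longrightarrow> y \<in> S)"
    and upper: "\<forall>x y. Gt G w x y \<le> ennreal C * neg_pow (rt x y) \<gamma>"
    and \<gamma>: "0 < \<gamma>" and C: "0 < C"
    and x: "x \<in> X0" and r: "0 < r" "ereal r < R0t rt X0 x" and y: "y \<notin> Ut rt x r"
  shows "ennreal (l\<^sup>2 * ((r / 2) powr \<gamma> / C / c3)) * Gt G w y x
           \<le> eps_tilde_norm mu w (closure (Ut rt x r)) y"
proof -
  define s where "s = (r / 2) powr \<gamma> / C"
  define B where "B = closure (Ut rt x r)"
  have "0 < s"
    using r C by (simp add: s_def)
  have V_U: "closure (Vset G x s) \<subseteq> Ut rt x r"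
    unfolding s_def using closure_Vset_subset_Ut[OF sym triangle topology w upper] \<gamma> C r by simp
  then have "y \<notin> Vset G x s"
    using y closure_subset by blast
  moreover have "ereal s < S0 G X0 x"
    unfolding s_def using S0_gt_if_less_R0t[OF sym w upper \<gamma> C r] .
  ultimately have "ennreal (s / c3) * G y x \<le> emeasure (eps mu (closure (Vset G x s)) y) UNIV"
    using G3 x \<open>0 < s\<close> by simp
  also have "\<dots> \<le> emeasure (eps mu B y) UNIV"
    using V_U closure_subset unfolding B_def by (intro eps_mass_mono[OF kernel]) auto
  finally have G3_xy: "ennreal (s / c3) * G y x \<le> emeasure (eps mu B y) UNIV" .
  have "ennreal (l\<^sup>2 * (s / c3)) * Gt G w y x \<le> ennreal (l / w y) * (ennreal (s / c3) * G y x)"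
    using l x w \<open>0 < s\<close> c3 by (intro ennreal_weight_Gt_le_G) auto
  also have "\<dots> \<le> ennreal (l / w y) * emeasure (eps mu B y) UNIV"
    using G3_xy by (rule mult_left_mono) simp
  also have "\<dots> \<le> eps_tilde_norm mu w B y"
    using closure_Ut_subset_if_less_R0t[OF r(2)] l w
    unfolding B_def by (intro eps_tilde_norm_ge[OF kernel closed_closure]) auto
  finally show ?thesis
    unfolding s_def B_def .
qed

theorem proposition7p4:
  fixes mu :: "'a::metric_space set \<Rightarrow> 'a \<Rightarrow> 'a measure"
    and G :: "'a \<Rightarrow> 'a \<Rightarrow> ennreal"
    and w :: "'a \<Rightarrow> real"
    and X0 :: "'a set"
    and rt :: "'a \<Rightarrow> 'a \<Rightarrow> real"
    and \<gamma> C :: real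
  assumes separable: "\<exists>D::'a set. countable D \<and> closure D = UNIV"
    and X0: "open X0" "X0 \<noteq> UNIV"
    and kernel: "harmonic_kernel mu"
    and G_borel: "(\<lambda>p. G (fst p) (snd p)) \<in> borel_measurable borel"
    and G_pos: "\<forall>x y. G x y > 0"
    and G2': "cond_G2' mu G w X0"
    and G3': "cond_G3' mu G X0"
    and rt_metric: "\<forall>x y. rt x y = 0 \<longleftrightarrow> x = y" "\<forall>x y. rt x y = rt y x"
      "\<forall>x y z. rt x z \<le> rt x y + rt y z"
    and rt_topology: "\<forall>S. open S \<longleftrightarrow> (\<forall>x\<in>S. \<exists>e>0. \<forall>y. rt x y < e \<longrightarrow> y \<in> S)"
    and \<gamma>: "\<gamma> \<ge> 1" and C: "C \<ge> 1"
    and comparable: "\<forall>x y. ennreal (1 / C) * neg_pow (rt x y) \<gamma> \<le> Gt G w x y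
                         \<and> Gt G w x y \<le> ennreal C * neg_pow (rt x y) \<gamma>"
  shows "\<exists>c3t::real. c3t \<ge> 1 \<and>
     (\<forall>x\<in>X0. \<forall>r. 0 < r \<and> ereal r < R0t rt X0 x \<longrightarrow>
        (\<forall>y. y \<notin> Ut rt x r \<longrightarrow>
           eps_tilde_norm mu w (closure (Ut rt x r)) y \<ge> ennreal (r powr \<gamma> / c3t) * Gt G w y x))"
proof -
  have w: "\<forall>x. 0 < w x \<and> w x \<le> 1"
    using G2' unfolding cond_G2'_def by (elim conjE) assumption
  obtain lam where "0 < lam" and lam: "\<forall>x\<in>X0. lam \<le> w x"
    using G2' unfolding cond_G2'_def by (elim conjE exE) assumption
  define l where "l = min lam 1"
  have l: "0 < l" "l \<le> 1" "\<forall>x\<in>X0. l \<le> w x"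
    using \<open>0 < lam\<close> lam by (auto simp: l_def)
  obtain c3 where "c3 \<ge> 1" and G3: "\<forall>x\<in>X0. \<forall>s. 0 < s \<and> ereal s < S0 G X0 x \<longrightarrow>
      (\<forall>y. y \<notin> Vset G x s \<longrightarrow>
         emeasure (eps mu (closure (Vset G x s)) y) UNIV \<ge> ennreal (s / c3) * G y x)"
    using G3' unfolding cond_G3'_def by (elim exE conjE)
  have upper: "\<forall>x y. Gt G w x y \<le> ennreal C * neg_pow (rt x y) \<gamma>"
    using comparable by blast
  define c3t where "c3t = c3 * C * 2 powr \<gamma> / l\<^sup>2"
  show ?thesis
  proof (intro exI[of _ c3t] conjI ballI allI impI)
    have "l\<^sup>2 \<le> 1 * 1 * 1"
      using l by (simp add: power_le_one)
    also have "\<dots> \<le> c3 * C * 2 powr \<gamma>"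
      using \<open>c3 \<ge> 1\<close> C \<gamma> by (intro mult_mono) (auto simp: ge_one_powr_ge_zero)
    finally show "1 \<le> c3t"
      unfolding c3t_def using l by simp
  next
    fix x r y
    assume "x \<in> X0" and r: "0 < r \<and> ereal r < R0t rt X0 x" and "y \<notin> Ut rt x r"
    have "r powr \<gamma> / c3t = l\<^sup>2 * ((r / 2) powr \<gamma> / C / c3)"
      using r l C \<open>c3 \<ge> 1\<close> by (simp add: c3t_def powr_divide field_simps)
    then show "ennreal (r powr \<gamma> / c3t) * Gt G w y x \<le> eps_tilde_norm mu w (closure (Ut rt x r)) y"
      using eps_tilde_norm_Ut_ge[OF kernel w _ _ _ G3 rt_metric(2,3) rt_topology upper]
        l \<open>c3 \<ge> 1\<close> \<gamma> C r \<open>x \<in> X0\<close> \<open>y \<notin> Ut rt x r\<close> by simp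
  qed
qed

end
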